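(* Let $N\ge1$, $n\ge1$, $\gamma>0$, and let channel gains $g_{S,k}>0$, $g_{k,D}>0$ ($k=1,\dots,N$) satisfy $g_{S,1}\le g_{S,2}\le\cdots\le g_{S,N}$. Put $C_{a,b}=C(g_{a,b}\gamma)$ and $V_{a,b}=V(g_{a,b}\gamma)$ with $C(\rho)=\tfrac12\log(1+\rho)$ and $V(\rho)=\frac{\rho}{2}\frac{2+\rho}{(1+\rho)^2}(\log e)^2$. Let $\varepsilon_d'\in(0,\tfrac12)$. For $x=(x_1[1],\dots,x_N[N])$ with all $x_k[k]>0$ define, for $1\le k\le m\le N$, $$x_m[k]=\sqrt{\tfrac{n}{V_{S,m}}}\,(C_{S,m}-C_{S,k})+\sqrt{\tfrac{V_{S,m}}{V_{S,k}}}\,x_k[k],\qquad x_D[k]=\sqrt{\tfrac{n}{V_{k,D}}}\,(C_{k,D}-C_{S,k})+\sqrt{\tfrac{V_{S,k}}{V_{k,D}}}\,x_k[k].$$ Consider the problem of minimizing $\sum_{k=1}^N\sqrt{V_{S,k}}\,x_k[k]$ over all $x$ with $x_k[k]>0$ for all $k$ subject to $$\sum_{k=1}^N\Big(\sum_{m=k}^N Q(x_m[k])+Q(x_D[k])\Big)\le\varepsilon_d'.$$ Then every optimal solution $x$ of this problem satisfies $$\sum_{k=1}^N\Big(\sum_{m=k}^N Q(x_m[k])+Q(x_D[k])\Big)=\varepsilon_d'.$$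
   Context: $Q(x)=\int_x^\infty\frac{1}{\sqrt{2\pi}}e^{-t^2/2}\,dt$ is the Gaussian tail function. $C$ is the capacity and $V$ the channel dispersion of a real AWGN channel with SNR $\rho$; $S$ is the source, $D$ the destination, relays are indexed $1,\dots,N$, $g_{a,b}$ is the channel gain of link $a\to b$, $\gamma$ the transmit SNR, and $n$ the blocklength. The variable $x_m[k]$ stands for $Q^{-1}$ of the error probability of relay $m$ (resp. $D$ for $x_D[k]$) decoding message $W_k$. *)

theory Defs
  imports "HOL-Analysis.Analysis"
begin

definition Qf :: "real \<Rightarrow> real" where
  "Qf x = (LBINT t:{x..}. (1 / sqrt (2 * pi)) * exp (- (t\<^sup>2) / 2))"

definition capC :: "real \<Rightarrow> real" where
  "capC \<rho> = (1/2) * log 2 (1 + \<rho>)"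

definition dispV :: "real \<Rightarrow> real" where
  "dispV \<rho> = (\<rho> / 2) * ((2 + \<rho>) / (1 + \<rho>)\<^sup>2) * (log 2 (exp 1))\<^sup>2"

text \<open>x_m[k] for relay m decoding W_k (k \<le> m), given x_k[k] = x k.
  gS k = g_{S,k}, gD k = g_{k,D}.\<close>
definition xrel :: "(nat \<Rightarrow> real) \<Rightarrow> real \<Rightarrow> nat \<Rightarrow> (nat \<Rightarrow> real) \<Rightarrow> nat \<Rightarrow> nat \<Rightarrow> real" where
  "xrel gS \<gamma> n x m k =
     sqrt (real n / dispV (gS m * \<gamma>)) * (capC (gS m * \<gamma>) - capC (gS k * \<gamma>))
     + sqrt (dispV (gS m * \<gamma>) / dispV (gS k * \<gamma>)) * x k"

definition xdst :: "(nat \<Rightarrow> real) \<Rightarrow> (nat \<Rightarrow> real) \<Rightarrow> real \<Rightarrow> nat \<Rightarrow> (nat \<Rightarrow> real) \<Rightarrow> nat \<Rightarrow> real" where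
  "xdst gS gD \<gamma> n x k =
     sqrt (real n / dispV (gD k * \<gamma>)) * (capC (gD k * \<gamma>) - capC (gS k * \<gamma>))
     + sqrt (dispV (gS k * \<gamma>) / dispV (gD k * \<gamma>)) * x k"

definition err_sum :: "nat \<Rightarrow> (nat \<Rightarrow> real) \<Rightarrow> (nat \<Rightarrow> real) \<Rightarrow> real \<Rightarrow> nat \<Rightarrow> (nat \<Rightarrow> real) \<Rightarrow> real" where
  "err_sum N gS gD \<gamma> n x =
     (\<Sum>k=1..N. (\<Sum>m=k..N. Qf (xrel gS \<gamma> n x m k)) + Qf (xdst gS gD \<gamma> n x k))"

definition objective :: "nat \<Rightarrow> (nat \<Rightarrow> real) \<Rightarrow> real \<Rightarrow> (nat \<Rightarrow> real) \<Rightarrow> real" where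
  "objective N gS \<gamma> x = (\<Sum>k=1..N. sqrt (dispV (gS k * \<gamma>)) * x k)"

definition feasible :: "nat \<Rightarrow> (nat \<Rightarrow> real) \<Rightarrow> (nat \<Rightarrow> real) \<Rightarrow> real \<Rightarrow> nat \<Rightarrow> real \<Rightarrow> (nat \<Rightarrow> real) \<Rightarrow> bool" where
  "feasible N gS gD \<gamma> n \<epsilon> x \<longleftrightarrow>
     (\<forall>k\<in>{1..N}. x k > 0) \<and> err_sum N gS gD \<gamma> n x \<le> \<epsilon>"

definition optimal :: "nat \<Rightarrow> (nat \<Rightarrow> real) \<Rightarrow> (nat \<Rightarrow> real) \<Rightarrow> real \<Rightarrow> nat \<Rightarrow> real \<Rightarrow> (nat \<Rightarrow> real) \<Rightarrow> bool" where
  "optimal N gS gD \<gamma> n \<epsilon> x \<longleftrightarrow>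
     feasible N gS gD \<gamma> n \<epsilon> x \<and>
     (\<forall>y. feasible N gS gD \<gamma> n \<epsilon> y \<longrightarrow> objective N gS \<gamma> x \<le> objective N gS \<gamma> y)"

end

theory Submission
  imports Defs "HOL-Probability.Probability"
begin

(* The Gaussian tail Q is 1-Lipschitz, since the standard normal density is bounded by 1,
   so the total error is continuous in each coordinate x_k[k]. If an optimal x left slack
   in the error constraint, lowering x_1[1] a little would keep it feasible while strictly
   decreasing the objective, whose coefficient sqrt V_{S,1} is positive. *)

lemma Qf_eq_set_integral_std_normal_density: "Qf x = (LBINT t:{x..}. std_normal_density t)"
  unfolding Qf_def std_normal_density_def by simp

lemma set_integrable_std_normal_density:
  "A \<in> sets lborel \<Longrightarrow> set_integrable lborel A std_normal_density"
  unfolding set_integrable_def by (rule integrable_mult_indicator) simp_all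

lemma std_normal_density_le_1: "std_normal_density t \<le> 1"
proof -
  have "exp (- t\<^sup>2 / 2) \<le> 1" by simp
  moreover have "1 / sqrt (2 * pi) \<le> 1"
    using pi_gt3 by (simp add: divide_le_eq real_le_rsqrt)
  ultimately show ?thesis
    unfolding std_normal_density_def by (intro mult_le_one) auto
qed

lemma Qf_Ico_split:
  assumes "a \<le> b"
  shows "Qf a = (LBINT t:{a..<b}. std_normal_density t) + Qf b"
proof -
  have "{a..} = {a..<b} \<union> {b..}" using assms by auto
  then show ?thesis
    unfolding Qf_eq_set_integral_std_normal_density
    by (simp only:) (rule set_integral_Un; auto intro: set_integrable_std_normal_density)
qed

lemma Qf_antimono: "a \<le> b \<Longrightarrow> Qf b \<le> Qf a"
  by (simp add: Qf_Ico_split set_lebesgue_integral_def integral_nonneg_AE split: split_indicator)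

lemma Qf_le_add_diff:
  assumes "a \<le> b"
  shows "Qf a \<le> Qf b + (b - a)"
proof -
  have const: "set_integrable lborel {a..<b} (\<lambda>_. 1::real)"
    unfolding set_integrable_def using assms by simp
  have "(LBINT t:{a..<b}. std_normal_density t) \<le> (LBINT t:{a..<b}. 1)"
    by (rule set_integral_mono)
      (auto intro: const set_integrable_std_normal_density std_normal_density_le_1)
  also have "\<dots> = b - a" using assms by (subst set_integral_const) auto
  finally show ?thesis using Qf_Ico_split[OF assms] by linarith
qed

lemma lipschitz_on_Qf: "1-lipschitz_on UNIV Qf"
proof (rule lipschitz_onI)
  fix a b :: real
  show "dist (Qf a) (Qf b) \<le> 1 * dist a b"
    using Qf_antimono[of a b] Qf_antimono[of b a] Qf_le_add_diff[of a b] Qf_le_add_diff[of b a]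
    by (cases "a \<le> b") (auto simp: dist_real_def)
qed simp

lemma isCont_Qf [continuous_intros]: "isCont f a \<Longrightarrow> isCont (\<lambda>x. Qf (f x)) a"
  using lipschitz_on_continuous_on[OF lipschitz_on_Qf]
  by (auto intro: isCont_o2 simp: continuous_on_eq_continuous_at)

lemma dispV_pos: "r > 0 \<Longrightarrow> dispV r > 0"
  unfolding dispV_def by (simp add: log_def add_pos_pos)

lemma isCont_fun_upd_apply [continuous_intros]: "isCont (\<lambda>t. (f(j := t)) k) a"
  by (cases "k = j") simp_all

lemma isCont_err_sum_fun_upd: "isCont (\<lambda>t. err_sum N gS gD \<gamma> n (x(j := t))) a"
  unfolding err_sum_def xrel_def xdst_def by (intro continuous_intros)

lemma objective_fun_upd:
  assumes "j \<in> {1..N}"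
  shows "objective N gS \<gamma> (x(j := t)) = objective N gS \<gamma> x + sqrt (dispV (gS j * \<gamma>)) * (t - x j)"
proof -
  have "objective N gS \<gamma> (x(j := t))
      = (\<Sum>k=1..N. sqrt (dispV (gS k * \<gamma>)) * x k
          + (if k = j then sqrt (dispV (gS k * \<gamma>)) * (t - x k) else 0))"
    unfolding objective_def by (intro sum.cong) (auto simp: algebra_simps)
  then show ?thesis
    using assms unfolding objective_def sum.distrib by simp
qed

lemma isCont_less_at_left:
  fixes f :: "real \<Rightarrow> real"
  assumes "isCont f a" and "f a < c" and "b < a"
  obtains t where "b < t" and "t < a" and "f t < c"
proof -
  have "\<forall>\<^sub>F t in at_left a. f t < c"
    using assms(1,2) by (auto intro: order_tendstoD(2) tendsto_within_subset simp: isCont_def)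
  moreover have "\<forall>\<^sub>F t in at_left a. t \<in> {b<..<a}"
    using assms(3) by (rule eventually_at_left_real)
  ultimately have "\<forall>\<^sub>F t in at_left a. b < t \<and> t < a \<and> f t < c"
    by eventually_elim auto
  then show ?thesis
    using that eventually_happens'[OF trivial_limit_at_left_real] by blast
qed

lemma optimal_err_sum_eq:
  assumes "optimal N gS gD \<gamma> n \<epsilon> x" and "j \<in> {1..N}" and "gS j > 0" and "\<gamma> > 0"
  shows "err_sum N gS gD \<gamma> n x = \<epsilon>"
proof (rule ccontr)
  assume "err_sum N gS gD \<gamma> n x \<noteq> \<epsilon>"
  moreover have x_pos: "\<forall>k\<in>{1..N}. x k > 0" and "err_sum N gS gD \<gamma> n x \<le> \<epsilon>"
    using assms(1) unfolding optimal_def feasible_def by auto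
  ultimately have "err_sum N gS gD \<gamma> n (x(j := x j)) < \<epsilon>" by simp
  moreover have "0 < x j" using x_pos assms(2) by blast
  ultimately obtain t where t: "0 < t" "t < x j" "err_sum N gS gD \<gamma> n (x(j := t)) < \<epsilon>"
    using isCont_less_at_left[OF isCont_err_sum_fun_upd] by blast
  have "feasible N gS gD \<gamma> n \<epsilon> (x(j := t))"
    unfolding feasible_def using x_pos t by auto
  moreover have "sqrt (dispV (gS j * \<gamma>)) > 0"
    using assms(3,4) by (simp add: dispV_pos)
  then have "objective N gS \<gamma> (x(j := t)) < objective N gS \<gamma> x"
    using objective_fun_upd[OF assms(2)] t(2) by (simp add: mult_pos_neg)
  ultimately show False
    using assms(1) unfolding optimal_def by fastforce
qed

theorem lemma2:
  fixes N n :: nat and \<gamma> \<epsilon> :: real and gS gD x :: "nat \<Rightarrow> real"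
  assumes "N \<ge> 1" and "n \<ge> 1" and "\<gamma> > 0"
    and "\<forall>k\<in>{1..N}. gS k > 0" and "\<forall>k\<in>{1..N}. gD k > 0"
    and "\<forall>k\<in>{1..N}. \<forall>m\<in>{1..N}. k \<le> m \<longrightarrow> gS k \<le> gS m"
    and "0 < \<epsilon>" and "\<epsilon> < 1/2"
    and "optimal N gS gD \<gamma> n \<epsilon> x"
  shows "err_sum N gS gD \<gamma> n x = \<epsilon>"
  using optimal_err_sum_eq[OF assms(9), of 1] assms(1,3,4) by simp

end
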